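(* Let $\kappa$ be a cardinal for which there exists a maximal independent family of size $\kappa$. Then there exists a maximal independent family of size $\kappa$ which is not densely maximal. In particular, there is always a maximal, non-densely maximal independent family of size $\mathfrak i$.
   Context: A family $\mathcal I \subseteq [\omega]^\omega$ is independent if for all finite disjoint $\mathcal A, \mathcal B \subseteq \mathcal I$ the set $\bigcap \mathcal A \setminus \bigcup \mathcal B$ is infinite; it is a maximal independent family (m.i.f.) if it is maximal under inclusion among independent families. $\mathfrak i$ denotes the least size of a maximal independent family. $\mathsf{FF}(\mathcal I)$ is the set of finite partial functions $h:\mathcal I \to 2$; for $h\in\mathsf{FF}(\mathcal I)$, $\mathcal I^h := \bigcap_{A \in \mathrm{dom}(h)} A^{h(A)}$ where $A^0 = A$ and $A^1 = \omega\setminus A$ (Boolean combinations). An independent family $\mathcal I$ is densely maximal if for every $X \in [\omega]^\omega$ and every $h \in \mathsf{FF}(\mathcal I)$ there is $h' \supseteq h$ in $\mathsf{FF}(\mathcal I)$ such that $\mathcal I^{h'} \setminus X$ or $\mathcal I^{h'} \cap X$ is finite. *)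

theory Defs
  imports Main "HOL-Library.Equipollence"
begin

definition independent :: "nat set set \<Rightarrow> bool" where
  "independent I \<longleftrightarrow> (\<forall>A\<in>I. infinite A) \<and>
     (\<forall>\<A> \<B>. finite \<A> \<and> finite \<B> \<and> \<A> \<subseteq> I \<and> \<B> \<subseteq> I \<and> \<A> \<inter> \<B> = {}
        \<longrightarrow> infinite (\<Inter>\<A> - \<Union>\<B>))"

definition max_independent :: "nat set set \<Rightarrow> bool" where
  "max_independent I \<longleftrightarrow> independent I \<and> (\<forall>J. independent J \<and> I \<subseteq> J \<longrightarrow> J = I)"

text \<open>FF(I): finite partial functions from I to 2 (2 = bool, False ~ 0, True ~ 1).\<close>

definition FF :: "nat set set \<Rightarrow> (nat set \<rightharpoonup> bool) set" where
  "FF I = {h. finite (dom h) \<and> dom h \<subseteq> I}"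

text \<open>Boolean combination I^h; A^0 = A, A^1 = omega - A; the empty intersection is omega.\<close>

definition bcomb :: "(nat set \<rightharpoonup> bool) \<Rightarrow> nat set" where
  "bcomb h = (\<Inter>A\<in>dom h. if h A = Some False then A else UNIV - A)"

definition densely_maximal :: "nat set set \<Rightarrow> bool" where
  "densely_maximal I \<longleftrightarrow>
     (\<forall>X. infinite X \<longrightarrow> (\<forall>h\<in>FF I. \<exists>h'\<in>FF I. h \<subseteq>\<^sub>m h' \<and>
        (finite (bcomb h' - X) \<or> finite (bcomb h' \<inter> X))))"

end

theory Submission
  imports Defs
begin

(* Replace every member A of a maximal independent family I by its triplicate
   {m. m div 3 \<in> A} and add the set D of non-multiples of 3. The result is again
   independent, and maximal: a set Y is decided by "outside D" together with the triplicate
   of a Boolean combination of I that decides {n. 3 * n \<in> Y}. It has the size of I because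
   maximal independent families are infinite. It is not densely maximal, since the family
   cannot tell 3n+1 from 3n+2: below D, the residue class of 1 splits every Boolean
   combination. Starting from a maximal independent family of least size gives the second
   claim. *)

lemma mem_bcomb_iff: "m \<in> bcomb h \<longleftrightarrow> (\<forall>A b. h A = Some b \<longrightarrow> (m \<in> A \<longleftrightarrow> \<not> b))"
  unfolding bcomb_def INT_iff dom_def mem_Collect_eq by (auto split: if_splits)

lemma bcomb_empty [simp]: "bcomb Map.empty = UNIV"
  by (simp add: bcomb_def)

lemma bcomb_singleton [simp]: "bcomb [A \<mapsto> False] = A"
  by (simp add: bcomb_def)

lemma bcomb_eq_Inter_Diff_Union:
  "bcomb h = \<Inter>{A. h A = Some False} - \<Union>{A. h A = Some True}"
  by (auto simp: mem_bcomb_iff) (metis (full_types))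

lemma bcomb_fun_upd: "bcomb (h(Y \<mapsto> b)) = bcomb (h(Y := None)) \<inter> (if b then - Y else Y)"
  by (auto simp: mem_bcomb_iff)

lemma bcomb_restrict_split:
  assumes "dom h \<subseteq> S \<union> T"
  shows "bcomb h = bcomb (h |` S) \<inter> bcomb (h |` T)"
proof -
  have "h A = Some b \<longleftrightarrow> (h |` S) A = Some b \<or> (h |` T) A = Some b" for A b
    using assms by (auto simp: restrict_map_def)
  then show ?thesis by (auto simp: mem_bcomb_iff)
qed

lemma bcomb_restrict_singleton:
  "bcomb (h |` {Y}) = (case h Y of None \<Rightarrow> UNIV | Some b \<Rightarrow> if b then - Y else Y)"
  by (auto simp: mem_bcomb_iff restrict_map_def split: option.split)

lemma bcomb_restrict_range_vimage: "bcomb (h |` range (vimage f)) = f -` bcomb (h \<circ> vimage f)"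
proof (rule set_eqI)
  fix x
  have "x \<in> bcomb (h |` range (vimage f)) \<longleftrightarrow> (\<forall>A b. h (f -` A) = Some b \<longrightarrow> (x \<in> f -` A \<longleftrightarrow> \<not> b))"
    unfolding mem_bcomb_iff restrict_map_def by (auto split: if_splits)
  also have "\<dots> \<longleftrightarrow> x \<in> f -` bcomb (h \<circ> vimage f)"
    by (simp add: mem_bcomb_iff)
  finally show "x \<in> bcomb (h |` range (vimage f)) \<longleftrightarrow> x \<in> f -` bcomb (h \<circ> vimage f)" .
qed

lemma independent_iff_infinite_bcomb: "independent I \<longleftrightarrow> (\<forall>h\<in>FF I. infinite (bcomb h))"
proof
  assume I: "independent I"
  show "\<forall>h\<in>FF I. infinite (bcomb h)"
  proof
    fix h assume h: "h \<in> FF I"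
    have "{A. h A = Some False} \<subseteq> dom h" "{A. h A = Some True} \<subseteq> dom h" by auto
    with h have "finite {A. h A = Some False}" "finite {A. h A = Some True}"
      "{A. h A = Some False} \<subseteq> I" "{A. h A = Some True} \<subseteq> I"
      unfolding FF_def by (auto intro: finite_subset)
    moreover have "{A. h A = Some False} \<inter> {A. h A = Some True} = {}" by auto
    ultimately show "infinite (bcomb h)"
      using I unfolding independent_def bcomb_eq_Inter_Diff_Union by blast
  qed
next
  assume H: "\<forall>h\<in>FF I. infinite (bcomb h)"
  show "independent I" unfolding independent_def
  proof (intro conjI allI impI ballI)
    fix A assume "A \<in> I"
    then have "[A \<mapsto> False] \<in> FF I" by (simp add: FF_def)
    with H show "infinite A" by force
  next
    fix \<A> \<B> :: "nat set set"
    assume a: "finite \<A> \<and> finite \<B> \<and> \<A> \<subseteq> I \<and> \<B> \<subseteq> I \<and> \<A> \<inter> \<B> = {}"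
    define h where "h A = (if A \<in> \<A> then Some False else if A \<in> \<B> then Some True else None)" for A
    have "dom h = \<A> \<union> \<B>" by (auto simp: h_def split: if_splits)
    with a have "h \<in> FF I" by (simp add: FF_def)
    moreover have "{A. h A = Some False} = \<A>" "{A. h A = Some True} = \<B>"
      using a by (auto simp: h_def)
    ultimately show "infinite (\<Inter>\<A> - \<Union>\<B>)" using H by (metis bcomb_eq_Inter_Diff_Union)
  qed
qed

lemma max_independent_iff:
  "max_independent I \<longleftrightarrow>
     independent I \<and> (\<forall>Y. \<exists>h\<in>FF I. finite (bcomb h - Y) \<or> finite (bcomb h \<inter> Y))"
proof (intro iffI conjI allI; (elim conjE)?)
  assume M: "max_independent I"
  then show I: "independent I" by (simp add: max_independent_def)
  fix Y
  show "\<exists>h\<in>FF I. finite (bcomb h - Y) \<or> finite (bcomb h \<inter> Y)"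
  proof (cases "Y \<in> I")
    case True
    then have "[Y \<mapsto> False] \<in> FF I" by (simp add: FF_def)
    then show ?thesis by (metis Diff_cancel bcomb_singleton finite.emptyI)
  next
    case False
    with M have "\<not> independent (insert Y I)" by (auto simp: max_independent_def)
    then obtain h where h: "h \<in> FF (insert Y I)" and fin: "finite (bcomb h)"
      by (auto simp: independent_iff_infinite_bcomb)
    have g: "h(Y := None) \<in> FF I" using h by (auto simp: FF_def)
    show ?thesis
    proof (cases "h Y")
      case None
      then have "h(Y := None) = h" by auto
      with g fin I show ?thesis by (metis independent_iff_infinite_bcomb)
    next
      case (Some b)
      then have "bcomb h = bcomb (h(Y := None)) \<inter> (if b then - Y else Y)"
        by (metis bcomb_fun_upd fun_upd_triv fun_upd_upd)
      with g fin show ?thesis by (cases b) (auto simp: Diff_eq)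
    qed
  qed
next
  assume I: "independent I"
    and decides: "\<forall>Y. \<exists>h\<in>FF I. finite (bcomb h - Y) \<or> finite (bcomb h \<inter> Y)"
  show "max_independent I" unfolding max_independent_def
  proof (intro conjI allI impI I)
    fix K assume K: "independent K \<and> I \<subseteq> K"
    show "K = I"
    proof (rule ccontr)
      assume "K \<noteq> I"
      with K obtain Y where Y: "Y \<in> K" "Y \<notin> I" by blast
      obtain h where h: "h \<in> FF I" and fin: "finite (bcomb h - Y) \<or> finite (bcomb h \<inter> Y)"
        using decides by blast
      have "h Y = None" using h Y by (auto simp: FF_def)
      then have "h(Y := None) = h" by (rule fun_upd_idem)
      then have "bcomb (h(Y \<mapsto> True)) = bcomb h - Y" "bcomb (h(Y \<mapsto> False)) = bcomb h \<inter> Y"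
        by (simp_all add: bcomb_fun_upd Diff_eq)
      moreover have "h(Y \<mapsto> True) \<in> FF K" "h(Y \<mapsto> False) \<in> FF K"
        using h K Y by (auto simp: FF_def)
      ultimately show False using fin K by (metis independent_iff_infinite_bcomb)
    qed
  qed
qed

lemma exists_set_splitting_classes:
  fixes C :: "'a::wellorder \<Rightarrow> 'a set"
  assumes inf: "\<And>m. infinite (C m)" and same_class: "\<And>m k. k \<in> C m \<Longrightarrow> C k = C m"
  shows "\<exists>Y. \<forall>m. infinite (C m \<inter> Y) \<and> infinite (C m - Y)"
proof -
  define Y where "Y = {k. \<exists>n. k = enumerate (C k) (2 * n)}"
  have "infinite (C m \<inter> Y) \<and> infinite (C m - Y)" for m
  proof -
    let ?e = "enumerate (C m)"
    have inj: "inj ?e" and mem: "\<And>n. ?e n \<in> C m"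
      using inj_enumerate enumerate_in_set inf by blast+
    have class_e: "C (?e n) = C m" for n
      using mem by (rule same_class)
    have "?e (2 * n) \<in> C m \<inter> Y" for n
      using mem class_e unfolding Y_def by auto
    moreover have "?e (2 * n + 1) \<in> C m - Y" for n
    proof -
      have "?e (2 * n + 1) \<noteq> ?e (2 * n')" for n'
      proof
        assume "?e (2 * n + 1) = ?e (2 * n')"
        with inj have "2 * n + 1 = 2 * n'" by (rule injD)
        then show False by presburger
      qed
      then show ?thesis
        using mem class_e unfolding Y_def by auto
    qed
    moreover have "inj (\<lambda>n. ?e (2 * n))" "inj (\<lambda>n. ?e (2 * n + 1))"
      by (auto intro!: injI dest!: injD[OF inj])
    ultimately show ?thesis
      by (metis (no_types, lifting) image_subsetI infinite_super range_inj_infinite)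
  qed
  then show ?thesis by blast
qed

text \<open>A finite independent family has infinite atoms, and a set halving every atom is decided
  by none of its Boolean combinations.\<close>

lemma max_independent_infinite:
  assumes M: "max_independent I"
  shows "infinite I"
proof
  assume fin: "finite I"
  have I: "independent I" using M by (simp add: max_independent_def)
  define atom where "atom m = {k. \<forall>A\<in>I. k \<in> A \<longleftrightarrow> m \<in> A}" for m
  have "atom m = bcomb (\<lambda>A. if A \<in> I then Some (m \<notin> A) else None)" for m
    unfolding atom_def set_eq_iff mem_bcomb_iff by (simp add: Ball_def)
  moreover have "(\<lambda>A. if A \<in> I then Some (m \<notin> A) else None) \<in> FF I" for m
    using fin by (auto simp: FF_def dom_def)
  ultimately have "infinite (atom m)" for m
    using I by (metis independent_iff_infinite_bcomb)
  moreover have "k \<in> atom m \<Longrightarrow> atom k = atom m" for k m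
    by (auto simp: atom_def)
  ultimately obtain Y where Y: "\<And>m. infinite (atom m \<inter> Y) \<and> infinite (atom m - Y)"
    using exists_set_splitting_classes by metis
  obtain h where h: "h \<in> FF I" and decided: "finite (bcomb h - Y) \<or> finite (bcomb h \<inter> Y)"
    using M by (meson max_independent_iff)
  have "infinite (bcomb h)" using h I by (simp add: independent_iff_infinite_bcomb)
  then obtain m where m: "m \<in> bcomb h" by (metis finite.emptyI ex_in_conv)
  have "atom m \<subseteq> bcomb h"
  proof
    fix k assume "k \<in> atom m"
    then have "k \<in> A \<longleftrightarrow> m \<in> A" if "h A = Some b" for A b
      using that h by (auto simp: atom_def FF_def)
    with m show "k \<in> bcomb h" by (simp add: mem_bcomb_iff)
  qed
  with decided Y[of m] show False by (meson Diff_mono Int_mono finite_subset order_refl)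
qed

lemma inj_vimage_surj: "surj f \<Longrightarrow> inj (vimage f)"
  by (metis injI surj_image_vimage_eq)

lemma infinite_residue_class:
  fixes S :: "nat set"
  assumes "infinite S" "r < k"
  shows "infinite {m. m mod k = r \<and> m div k \<in> S}"
proof -
  have "(\<lambda>n. k * n + r) ` S \<subseteq> {m. m mod k = r \<and> m div k \<in> S}"
    using assms(2) by auto
  moreover have "inj (\<lambda>n. k * n + r)"
    using assms(2) by (auto intro: injI)
  ultimately show ?thesis
    using assms(1) by (metis finite_imageD finite_subset inj_on_subset subset_UNIV)
qed

definition triplicate :: "nat set \<Rightarrow> nat set" where
  "triplicate = vimage (\<lambda>m. m div 3)"

definition nonmult3 :: "nat set" where
  "nonmult3 = {m. m mod 3 \<noteq> 0}"

definition triplicate_family :: "nat set set \<Rightarrow> nat set set" where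
  "triplicate_family I = insert nonmult3 (triplicate ` I)"

lemma inj_triplicate: "inj triplicate"
proof -
  have "surj (\<lambda>m::nat. m div 3)"
    by (rule surjI[of _ "\<lambda>n. 3 * n"]) simp
  then show ?thesis unfolding triplicate_def by (rule inj_vimage_surj)
qed

lemma nonmult3_notin_range_triplicate: "nonmult3 \<notin> range triplicate"
proof
  assume "nonmult3 \<in> range triplicate"
  then obtain A where A: "nonmult3 = (\<lambda>m. m div 3) -` A"
    by (auto simp: triplicate_def)
  have "(1::nat) \<in> nonmult3" by (simp add: nonmult3_def)
  then have "(0::nat) \<in> nonmult3" unfolding A by simp
  then show False by (simp add: nonmult3_def)
qed

lemma bcomb_triplicate_family:
  assumes "dom h \<subseteq> triplicate_family I"
  shows "bcomb h = bcomb (h |` {nonmult3}) \<inter> (\<lambda>m. m div 3) -` bcomb (h \<circ> triplicate)"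
proof -
  have "dom h \<subseteq> {nonmult3} \<union> range triplicate"
    using assms by (auto simp: triplicate_family_def)
  then show ?thesis
    unfolding triplicate_def by (metis bcomb_restrict_split bcomb_restrict_range_vimage)
qed

lemma comp_triplicate_in_FF:
  assumes "h \<in> FF (triplicate_family I)"
  shows "h \<circ> triplicate \<in> FF I"
proof -
  have dom_h: "finite (dom h)" "dom h \<subseteq> insert nonmult3 (triplicate ` I)"
    using assms by (simp_all add: FF_def triplicate_family_def)
  have "dom (h \<circ> triplicate) = triplicate -` dom h" by auto
  moreover have "finite (triplicate -` dom h)"
    using dom_h(1) inj_triplicate by (rule finite_vimageI)
  moreover have "triplicate -` dom h \<subseteq> I"
  proof
    fix A assume "A \<in> triplicate -` dom h"
    then have "triplicate A \<in> insert nonmult3 (triplicate ` I)" using dom_h(2) by auto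
    moreover have "triplicate A \<noteq> nonmult3" using nonmult3_notin_range_triplicate by auto
    ultimately have "triplicate A \<in> triplicate ` I" by simp
    then show "A \<in> I" using inj_triplicate by (simp add: inj_image_mem_iff)
  qed
  ultimately show ?thesis by (simp add: FF_def)
qed

lemma Compl_nonmult3_Int_vimage_div3: "- nonmult3 \<inter> (\<lambda>m. m div 3) -` B = (\<lambda>n. 3 * n) ` B"
proof (rule set_eqI)
  fix m :: nat
  show "m \<in> - nonmult3 \<inter> (\<lambda>m. m div 3) -` B \<longleftrightarrow> m \<in> (\<lambda>n. 3 * n) ` B"
  proof
    assume m: "m \<in> - nonmult3 \<inter> (\<lambda>m. m div 3) -` B"
    then have "m = 3 * (m div 3)"
      using div_mult_mod_eq[of m 3] by (simp add: nonmult3_def)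
    with m show "m \<in> (\<lambda>n. 3 * n) ` B" by (metis IntD2 image_eqI vimageD)
  qed (auto simp: nonmult3_def)
qed

lemma independent_triplicate_family:
  assumes "independent I"
  shows "independent (triplicate_family I)"
  unfolding independent_iff_infinite_bcomb
proof
  fix h assume h: "h \<in> FF (triplicate_family I)"
  let ?S = "bcomb (h \<circ> triplicate)"
  have "infinite ?S"
    using comp_triplicate_in_FF[OF h] assms by (simp add: independent_iff_infinite_bcomb)
  define r :: nat where "r = (if h nonmult3 = Some True then 0 else 1)"
  have "m \<in> bcomb (h |` {nonmult3})" if "m mod 3 = r" for m
    using that by (auto simp: bcomb_restrict_singleton r_def nonmult3_def split: option.split)
  moreover have "bcomb h = bcomb (h |` {nonmult3}) \<inter> (\<lambda>m. m div 3) -` ?S"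
    using h by (intro bcomb_triplicate_family[of h I]) (simp add: FF_def)
  ultimately have "{m. m mod 3 = r \<and> m div 3 \<in> ?S} \<subseteq> bcomb h" by auto
  moreover have "infinite {m. m mod 3 = r \<and> m div 3 \<in> ?S}"
    using \<open>infinite ?S\<close> by (rule infinite_residue_class) (simp add: r_def)
  ultimately show "infinite (bcomb h)" by (rule infinite_super)
qed

lemma not_densely_maximal_triplicate_family:
  assumes "independent I"
  shows "\<not> densely_maximal (triplicate_family I)"
proof
  assume dense: "densely_maximal (triplicate_family I)"
  define X where "X = {m::nat. m mod 3 = 1}"
  have "infinite X"
    using infinite_residue_class[of UNIV 1 3] by (simp add: X_def)
  moreover have "[nonmult3 \<mapsto> False] \<in> FF (triplicate_family I)"
    by (simp add: FF_def triplicate_family_def)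
  ultimately obtain h where h: "h \<in> FF (triplicate_family I)" "[nonmult3 \<mapsto> False] \<subseteq>\<^sub>m h"
    and decided: "finite (bcomb h - X) \<or> finite (bcomb h \<inter> X)"
    using dense unfolding densely_maximal_def by blast
  let ?S = "bcomb (h \<circ> triplicate)"
  have "infinite ?S"
    using comp_triplicate_in_FF[OF h(1)] assms by (simp add: independent_iff_infinite_bcomb)
  have "h nonmult3 = Some False"
    using h(2) by (auto simp: map_le_def)
  then have "bcomb h = nonmult3 \<inter> (\<lambda>m. m div 3) -` ?S"
    using h(1) bcomb_triplicate_family[of h I] by (simp add: FF_def bcomb_restrict_singleton)
  then have "{m. m mod 3 = 1 \<and> m div 3 \<in> ?S} \<subseteq> bcomb h \<inter> X"
    "{m. m mod 3 = 2 \<and> m div 3 \<in> ?S} \<subseteq> bcomb h - X"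
    by (auto simp: nonmult3_def X_def)
  moreover have "infinite {m. m mod 3 = 1 \<and> m div 3 \<in> ?S}"
    "infinite {m. m mod 3 = 2 \<and> m div 3 \<in> ?S}"
    using \<open>infinite ?S\<close> by (simp_all add: infinite_residue_class)
  ultimately show False
    using decided by (meson finite_subset)
qed

lemma max_independent_triplicate_family:
  assumes M: "max_independent I"
  shows "max_independent (triplicate_family I)"
  unfolding max_independent_iff
proof (intro conjI allI)
  show "independent (triplicate_family I)"
    using M by (simp add: max_independent_def independent_triplicate_family)
  fix Y
  obtain g where g: "g \<in> FF I" and decided:
    "finite (bcomb g - (\<lambda>n. 3 * n) -` Y) \<or> finite (bcomb g \<inter> (\<lambda>n. 3 * n) -` Y)"
    using M by (meson max_independent_iff)
  define h where "h = ((g \<circ> inv triplicate) |` (triplicate ` dom g))(nonmult3 \<mapsto> True)"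
  have "h \<circ> triplicate = g"
  proof
    fix A
    have "triplicate A \<noteq> nonmult3" using nonmult3_notin_range_triplicate by auto
    then have "(h \<circ> triplicate) A = ((g \<circ> inv triplicate) |` (triplicate ` dom g)) (triplicate A)"
      by (simp add: h_def)
    also have "\<dots> = g A"
      using inj_triplicate by (simp add: restrict_map_def inj_image_mem_iff domIff)
    finally show "(h \<circ> triplicate) A = g A" .
  qed
  moreover have "h nonmult3 = Some True" by (simp add: h_def)
  moreover have "h \<in> FF (triplicate_family I)"
    using g by (auto simp: h_def FF_def triplicate_family_def)
  ultimately have "bcomb h = (\<lambda>n. 3 * n) ` bcomb g"
    using bcomb_triplicate_family[of h I]
    by (simp add: FF_def bcomb_restrict_singleton Compl_nonmult3_Int_vimage_div3)
  then have "bcomb h - Y = (\<lambda>n. 3 * n) ` (bcomb g - (\<lambda>n. 3 * n) -` Y)"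
    "bcomb h \<inter> Y = (\<lambda>n. 3 * n) ` (bcomb g \<inter> (\<lambda>n. 3 * n) -` Y)"
    by auto
  with \<open>h \<in> FF (triplicate_family I)\<close> decided
  show "\<exists>h\<in>FF (triplicate_family I). finite (bcomb h - Y) \<or> finite (bcomb h \<inter> Y)"
    by (metis finite_imageI)
qed

lemma eqpoll_triplicate_family:
  assumes "infinite I"
  shows "triplicate_family I \<approx> I"
proof -
  have inj: "inj_on triplicate I" using inj_triplicate by (rule inj_on_subset) simp
  then have "infinite (triplicate ` I)" using assms by (simp add: finite_image_iff)
  then have "triplicate_family I \<approx> triplicate ` I"
    unfolding triplicate_family_def by (rule infinite_insert_eqpoll)
  also have "triplicate ` I \<approx> I" using inj by (rule inj_on_image_eqpoll_self)
  finally show ?thesis .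
qed

lemma independent_Union_chain:
  assumes "C \<in> chains {I. independent I}"
  shows "independent (\<Union>C)"
  unfolding independent_iff_infinite_bcomb
proof
  fix h assume h: "h \<in> FF (\<Union>C)"
  show "infinite (bcomb h)"
  proof (cases "dom h = {}")
    case True
    then show ?thesis by simp
  next
    case False
    with h have "C \<noteq> {}" by (auto simp: FF_def)
    moreover have "chain\<^sub>\<subseteq> C" using assms by (simp add: chains_def)
    ultimately obtain B where B: "B \<in> C" "dom h \<subseteq> B"
      using h finite_subset_Union_chain[of "dom h" C UNIV]
      unfolding FF_def chain_subset_alt_def by blast
    then have "h \<in> FF B" using h by (simp add: FF_def)
    moreover have "independent B" using assms B(1) by (auto simp: chains_def)
    ultimately show ?thesis by (simp add: independent_iff_infinite_bcomb)
  qed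
qed

lemma exists_max_independent: "\<exists>I. max_independent I"
proof -
  obtain M where "M \<in> {I. independent I}" "\<forall>J\<in>{I. independent I}. M \<subseteq> J \<longrightarrow> J = M"
    using Zorn_Lemma[of "{I. independent I}"] independent_Union_chain by blast
  then show ?thesis by (auto simp: max_independent_def)
qed

lemma exists_lepoll_least:
  fixes P :: "'a set \<Rightarrow> bool"
  assumes "P A"
  shows "\<exists>B. P B \<and> (\<forall>C. P C \<longrightarrow> B \<lesssim> C)"
proof -
  define Q where "Q = {card_of B | B. P B}"
  have "card_of A \<in> Q" using assms by (auto simp: Q_def)
  then obtain r where "r \<in> Q" and least: "\<And>r'. (r', r) \<in> ordLess \<Longrightarrow> r' \<notin> Q"
    using wfE_min[OF wf_ordLess] by metis
  then obtain B where B: "P B" "r = card_of B" by (auto simp: Q_def)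
  have "B \<lesssim> C" if "P C" for C
  proof -
    have "(card_of C, card_of B) \<notin> ordLess" using least that B(2) by (auto simp: Q_def)
    then have "(card_of B, card_of C) \<in> ordLeq"
      using not_ordLess_iff_ordLeq[OF card_of_Well_order card_of_Well_order] by blast
    then show ?thesis unfolding lepoll_def using card_of_ordLeq by blast
  qed
  with B(1) show ?thesis by blast
qed

theorem proposition2p4:
  shows "(\<forall>I. max_independent I \<longrightarrow>
            (\<exists>J. max_independent J \<and> J \<approx> I \<and> \<not> densely_maximal J))
       \<and> (\<exists>J. max_independent J \<and> \<not> densely_maximal J \<and>
            (\<forall>I. max_independent I \<longrightarrow> J \<lesssim> I))"
proof -
  have witness: "max_independent (triplicate_family I) \<and> triplicate_family I \<approx> I
      \<and> \<not> densely_maximal (triplicate_family I)" if "max_independent I" for I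
  proof (intro conjI)
    show "max_independent (triplicate_family I)"
      using that by (rule max_independent_triplicate_family)
    show "triplicate_family I \<approx> I"
      using that by (intro eqpoll_triplicate_family max_independent_infinite)
    show "\<not> densely_maximal (triplicate_family I)"
      using that by (intro not_densely_maximal_triplicate_family) (simp add: max_independent_def)
  qed
  obtain I0 where I0: "max_independent I0" "\<forall>I. max_independent I \<longrightarrow> I0 \<lesssim> I"
    using exists_max_independent exists_lepoll_least by metis
  then have "\<forall>I. max_independent I \<longrightarrow> triplicate_family I0 \<lesssim> I"
    using witness[OF I0(1)] lepoll_trans1 by blast
  then show ?thesis using witness I0(1) by blast
qed

end
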